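(* For all arbitrarily large integers $n$ and $y$ such that $n=\sum_{i=0}^h y^i$ for some integer $h\ge0$, there exists a trie $\mathcal T$ with $n$ nodes and height $h$ such that (1) $n\mathcal H_k(\mathcal T)=0$ for every integer $k\ge1$, and (2) $(n-1)\mathcal H^{label}_k(\mathcal T)\ge (n-1)\log y$ for every integer $k\ge0$.
   Context: A trie over a finite totally ordered alphabet $\Sigma$ is a rooted ordered tree with edges labeled by symbols of $\Sigma$ such that edges leaving the same node have distinct labels and siblings are ordered by their incoming labels; its height is the maximum depth of a node (root has depth 0). For node $u$: $out(u)$ is the set of labels of edges leaving $u$; $\lambda(u)$ is the label of the edge entering $u$, with $\lambda(\text{root})=\#\notin\Sigma$; $\pi(u)$ is the parent, $\pi(\text{root})=\text{root}$; $\lambda_0(u)=\epsilon$, $\lambda_k(u)=\lambda_{k-1}(\pi(u))\cdot\lambda(u)$. For a length-$k$ string $w$ and $c\in\Sigma$: $n_w=|\{u:\lambda_k(u)=w\}|$, $n_{w,c}=|\{u:\lambda_k(u)=w,\ c\in out(u)\}|$. Logs base 2, $0\log(x/0)=0$. $\mathcal H_k(\mathcal T)=\sum_{w}\sum_{c\in\Sigma}\left[\frac{n_{w,c}}{n}\log\frac{n_w}{n_{w,c}}+\frac{n_w-n_{w,c}}{n}\log\frac{n_w}{n_w-n_{w,c}}\right]$ over contexts $w$ with $n_w>0$. For a string $X$ of length $\ell>0$ with $\ell_c$ occurrences of $c$, $\mathcal H_0(X)=\sum_c\frac{\ell_c}{\ell}\log\frac{\ell}{\ell_c}$ (and $0$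 for the empty string). $cover(w)$ is the concatenation (any order) of the labels of all edges leaving nodes $u$ with $\lambda_k(u)=w$, and $(n-1)\mathcal H^{label}_k(\mathcal T)=\sum_w|cover(w)|\,\mathcal H_0(cover(w))$. *)

theory Defs
  imports Complex_Main "HOL-Library.List_Lexorder"
begin

text \<open>A trie over a finite alphabet Sg (a finite subset of the totally ordered type nat)
  is represented by its set of nodes, each node being identified with the string of edge
  labels on the path from the root (the root is the empty string). Prefix-closedness makes
  this a rooted tree; edges leaving a node automatically carry distinct labels, and
  siblings are ordered by their labels.\<close>

definition is_trie :: "nat set \<Rightarrow> nat list set \<Rightarrow> bool" where
  "is_trie Sg T \<longleftrightarrow> finite Sg \<and> finite T \<and> [] \<in> T \<and>
     (\<forall>u\<in>T. set u \<subseteq> Sg) \<and> (\<forall>u c. u @ [c] \<in> T \<longrightarrow> u \<in> T)"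

definition trie_height :: "nat list set \<Rightarrow> nat" where
  "trie_height T = Max (length ` T)"

definition out :: "nat list set \<Rightarrow> nat list \<Rightarrow> nat set" where
  "out T u = {c. u @ [c] \<in> T}"

text \<open>lambda(u): label of the edge entering u; None plays the role of the symbol #\<close>
definition lam :: "nat list \<Rightarrow> nat option" where
  "lam u = (if u = [] then None else Some (last u))"

text \<open>parent; the parent of the root is the root (butlast [] = [])\<close>
definition par :: "nat list \<Rightarrow> nat list" where
  "par u = butlast u"

fun lamk :: "nat \<Rightarrow> nat list \<Rightarrow> nat option list" where
  "lamk 0 u = []"
| "lamk (Suc k) u = lamk k (par u) @ [lam u]"

definition n_w :: "nat list set \<Rightarrow> nat \<Rightarrow> nat option list \<Rightarrow> nat" where
  "n_w T k w = card {u\<in>T. lamk k u = w}"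

definition n_wc :: "nat list set \<Rightarrow> nat \<Rightarrow> nat option list \<Rightarrow> nat \<Rightarrow> nat" where
  "n_wc T k w c = card {u\<in>T. lamk k u = w \<and> c \<in> out T u}"

definition eterm :: "nat \<Rightarrow> nat \<Rightarrow> nat \<Rightarrow> real" where
  "eterm n a b = (if a = 0 then 0 else real a / real n * log 2 (real b / real a))"

text \<open>k-th order entropy H_k(T); sum over contexts w with n_w > 0, i.e. w in lamk k ` T\<close>
definition Hk :: "nat set \<Rightarrow> nat list set \<Rightarrow> nat \<Rightarrow> real" where
  "Hk Sg T k = (\<Sum>w\<in>lamk k ` T. \<Sum>c\<in>Sg.
      eterm (card T) (n_wc T k w c) (n_w T k w)
    + eterm (card T) (n_w T k w - n_wc T k w c) (n_w T k w))"

definition H0 :: "nat list \<Rightarrow> real" where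
  "H0 X = (if X = [] then 0 else
     (\<Sum>c\<in>set X. real (count_list X c) / real (length X)
                   * log 2 (real (length X) / real (count_list X c))))"

definition cover :: "nat list set \<Rightarrow> nat \<Rightarrow> nat option list \<Rightarrow> nat list" where
  "cover T k w = concat (map (\<lambda>u. sorted_list_of_set (out T u))
                              (sorted_list_of_set {u\<in>T. lamk k u = w}))"

text \<open>(n-1) H^label_k(T) = sum_w |cover(w)| H0(cover(w))\<close>
definition nHlabel :: "nat list set \<Rightarrow> nat \<Rightarrow> real" where
  "nHlabel T k = (\<Sum>w\<in>lamk k ` T. real (length (cover T k w)) * H0 (cover T k w))"

end

theory Submission
  imports Defs
begin

(* Take the trie of all strings u of length at most h with u ! i in [i y, i y + y).
   The label entering a node then encodes its depth, and the children of a node depend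
   only on its depth, so every context of length k >= 1 fixes out(u) and H_k vanishes.
   Every internal node has exactly y children with pairwise distinct labels, so in each
   cover(w) every symbol occurs at most |cover(w)|/y times, giving H_0(cover(w)) >= log y;
   the lengths |cover(w)| add up to the n - 1 edges. *)

lemma log_le_H0:
  assumes "y \<ge> (1::nat)" and "X \<noteq> []"
    and count: "\<And>c. y * count_list X c \<le> length X"
  shows "log 2 (real y) \<le> H0 X"
proof -
  let ?L = "real (length X)"
  have L: "?L > 0" using \<open>X \<noteq> []\<close> by simp
  have "(\<Sum>c\<in>set X. real (count_list X c) / ?L * log 2 (real y))
      \<le> (\<Sum>c\<in>set X. real (count_list X c) / ?L * log 2 (?L / real (count_list X c)))"
  proof (rule sum_mono)
    fix c assume "c \<in> set X"
    then have "count_list X c > 0" by (metis count_list_0_iff gr0I)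
    moreover have "real y * real (count_list X c) \<le> ?L"
      using count[of c] by (metis of_nat_le_iff of_nat_mult)
    ultimately have "real y \<le> ?L / real (count_list X c)" by (simp add: field_simps)
    then show "real (count_list X c) / ?L * log 2 (real y)
             \<le> real (count_list X c) / ?L * log 2 (?L / real (count_list X c))"
      using \<open>y \<ge> 1\<close> by (intro mult_left_mono) auto
  qed
  also have "\<dots> = H0 X" using \<open>X \<noteq> []\<close> by (simp add: H0_def)
  finally have "(\<Sum>c\<in>set X. real (count_list X c)) / ?L * log 2 (real y) \<le> H0 X"
    by (simp add: sum_divide_distrib[symmetric] sum_distrib_right[symmetric])
  moreover have "(\<Sum>c\<in>set X. real (count_list X c)) = ?L"
    by (metis sum_count_set finite_set of_nat_sum order_refl)
  ultimately show ?thesis using L by simp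
qed

lemma count_list_distinct:
  "distinct xs \<Longrightarrow> count_list xs c = (if c \<in> set xs then 1 else 0)"
  by (induction xs) auto

lemma count_list_concat:
  "count_list (concat xss) c = (\<Sum>xs\<leftarrow>xss. count_list xs c)"
  by (induction xss) auto

lemma finite_out: "finite T \<Longrightarrow> finite (out T u)"
proof -
  assume "finite T"
  have "out T u \<subseteq> last ` T" unfolding out_def by (auto intro: image_eqI[where x="u @ [_]"])
  then show ?thesis using \<open>finite T\<close> finite_subset by blast
qed

text \<open>Every non-root node is the target of exactly one edge.\<close>

lemma sum_card_out:
  assumes "is_trie Sg T"
  shows "(\<Sum>u\<in>T. card (out T u)) = card T - 1"
proof -
  have T: "finite T" "[] \<in> T" and closed: "\<And>u c. u @ [c] \<in> T \<Longrightarrow> u \<in> T"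
    using assms by (auto simp: is_trie_def)
  have "(\<Sum>u\<in>T. card (out T u)) = card (Sigma T (out T))"
    using T finite_out by simp
  also have "\<dots> = card ((\<lambda>(u, c). u @ [c]) ` Sigma T (out T))"
    by (rule card_image[symmetric]) (auto simp: inj_on_def)
  also have "(\<lambda>(u, c). u @ [c]) ` Sigma T (out T) = T - {[]}"
  proof (rule set_eqI, rule iffI)
    fix v assume "v \<in> T - {[]}"
    then have "v = butlast v @ [last v]" "v \<in> T" by auto
    then show "v \<in> (\<lambda>(u, c). u @ [c]) ` Sigma T (out T)"
      using closed[of "butlast v" "last v"] unfolding out_def
      by (intro image_eqI[where x="(butlast v, last v)"]) auto
  qed (auto simp: out_def)
  finally show ?thesis using T by simp
qed

lemma length_cover:
  "finite T \<Longrightarrow> length (cover T k w) = (\<Sum>u\<in>{u\<in>T. lamk k u = w}. card (out T u))"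
  unfolding cover_def by (simp add: length_concat o_def sum_list_distinct_conv_sum_set)

lemma count_list_cover:
  "finite T \<Longrightarrow>
     count_list (cover T k w) c = (\<Sum>u\<in>{u\<in>T. lamk k u = w}. if c \<in> out T u then 1 else 0)"
  unfolding cover_def
  by (simp add: count_list_concat count_list_distinct finite_out o_def
      sum_list_distinct_conv_sum_set)

lemma length_cover_le_H0:
  assumes "finite T" "y \<ge> 1"
    and branching: "\<And>u. u \<in> T \<Longrightarrow> out T u = {} \<or> card (out T u) = y"
  shows "length (cover T k w) * log 2 (real y) \<le> length (cover T k w) * H0 (cover T k w)"
proof (cases "cover T k w = []")
  case False
  have "y * count_list (cover T k w) c \<le> length (cover T k w)" for c
  proof -
    have "y * count_list (cover T k w) c
        = (\<Sum>u\<in>{u\<in>T. lamk k u = w}. y * (if c \<in> out T u then 1 else 0))"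
      using \<open>finite T\<close> by (simp add: count_list_cover sum_distrib_left)
    also have "\<dots> \<le> (\<Sum>u\<in>{u\<in>T. lamk k u = w}. card (out T u))"
      by (rule sum_mono) (use branching in auto)
    finally show ?thesis using \<open>finite T\<close> by (simp add: length_cover)
  qed
  then have "log 2 (real y) \<le> H0 (cover T k w)" using log_le_H0 \<open>y \<ge> 1\<close> False by blast
  then show ?thesis by (intro mult_left_mono) auto
qed simp

lemma nHlabel_ge_log_branching:
  assumes "is_trie Sg T" "y \<ge> 1"
    and branching: "\<And>u. u \<in> T \<Longrightarrow> out T u = {} \<or> card (out T u) = y"
  shows "real (card T - 1) * log 2 (real y) \<le> nHlabel T k"
proof -
  have "finite T" using assms(1) by (simp add: is_trie_def)
  have "real (card T - 1) = (\<Sum>u\<in>T. real (card (out T u)))"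
    using sum_card_out[OF assms(1)] by (metis of_nat_sum)
  also have "\<dots> = (\<Sum>w\<in>lamk k ` T. real (length (cover T k w)))"
    using \<open>finite T\<close> by (simp add: length_cover sum.image_gen[OF \<open>finite T\<close>, of _ "lamk k"])
  finally have "real (card T - 1) * log 2 (real y)
      = (\<Sum>w\<in>lamk k ` T. real (length (cover T k w)) * log 2 (real y))"
    by (simp add: sum_distrib_right)
  also have "\<dots> \<le> nHlabel T k"
    unfolding nHlabel_def
    by (rule sum_mono) (rule length_cover_le_H0[OF \<open>finite T\<close> assms(2) branching])
  finally show ?thesis .
qed

lemma Hk_eq_0_if_context_determines_out:
  assumes "\<And>u v. u \<in> T \<Longrightarrow> v \<in> T \<Longrightarrow> lamk k u = lamk k v \<Longrightarrow> out T u = out T v"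
  shows "Hk Sg T k = 0"
  unfolding Hk_def
proof (intro sum.neutral ballI)
  fix w c assume "w \<in> lamk k ` T"
  then obtain u where u: "u \<in> T" "w = lamk k u" by auto
  show "eterm (card T) (n_wc T k w c) (n_w T k w)
      + eterm (card T) (n_w T k w - n_wc T k w c) (n_w T k w) = 0"
  proof (cases "c \<in> out T u")
    case True
    then have "{v\<in>T. lamk k v = w \<and> c \<in> out T v} = {v\<in>T. lamk k v = w}"
      using assms u by blast
    then show ?thesis by (simp add: n_wc_def n_w_def eterm_def)
  next
    case False
    then have "{v\<in>T. lamk k v = w \<and> c \<in> out T v} = {}"
      using assms u by blast
    then have "n_wc T k w c = 0" unfolding n_wc_def by (metis card.empty)
    then show ?thesis by (simp add: eterm_def)
  qed
qed

definition level_coded :: "nat \<Rightarrow> nat list \<Rightarrow> bool" where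
  "level_coded y u \<longleftrightarrow> (\<forall>i<length u. i * y \<le> u ! i \<and> u ! i < i * y + y)"

definition level_trie :: "nat \<Rightarrow> nat \<Rightarrow> nat list set" where
  "level_trie y h = {u. length u \<le> h \<and> level_coded y u}"

lemma level_coded_snoc:
  "level_coded y (u @ [c]) \<longleftrightarrow> level_coded y u \<and> c \<in> {length u * y..<length u * y + y}"
  unfolding level_coded_def by (auto simp: nth_append less_Suc_eq)

lemma card_level_coded: "card {u. length u = d \<and> level_coded y u} = y ^ d"
proof (induction d)
  case 0
  have "{u. length u = 0 \<and> level_coded y u} = {[]}" by (auto simp: level_coded_def)
  then show ?case by simp
next
  case (Suc d)
  let ?snoc = "\<lambda>(u, c). u @ [c]"
  have "{u. length u = Suc d \<and> level_coded y u}
      = ?snoc ` ({u. length u = d \<and> level_coded y u} \<times> {d * y..<d * y + y})"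
  proof (rule set_eqI, rule iffI)
    fix v assume v: "v \<in> {u. length u = Suc d \<and> level_coded y u}"
    then obtain u c where "v = u @ [c]" by (cases v rule: rev_cases) auto
    with v show "v \<in> ?snoc ` ({u. length u = d \<and> level_coded y u} \<times> {d * y..<d * y + y})"
      by (intro image_eqI[where x="(u, c)"]) (auto simp: level_coded_snoc)
  qed (auto simp: level_coded_snoc)
  also have "card \<dots> = card ({u. length u = d \<and> level_coded y u} \<times> {d * y..<d * y + y})"
    by (rule card_image) (auto simp: inj_on_def)
  also have "\<dots> = y ^ Suc d" using Suc by (simp add: card_cartesian_product)
  finally show ?case .
qed

lemma set_level_trie: "u \<in> level_trie y h \<Longrightarrow> set u \<subseteq> {0..<h * y}"
proof -
  assume u: "u \<in> level_trie y h"
  have "u ! i < h * y" if "i < length u" for i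
  proof -
    have "u ! i < (i + 1) * y" using u that by (auto simp: level_trie_def level_coded_def)
    also have "\<dots> \<le> h * y" using u that by (intro mult_right_mono) (auto simp: level_trie_def)
    finally show ?thesis .
  qed
  then show ?thesis by (auto simp: in_set_conv_nth)
qed

lemma finite_level_trie: "finite (level_trie y h)"
proof (rule finite_subset)
  show "level_trie y h \<subseteq> {xs. set xs \<subseteq> {0..<h * y} \<and> length xs \<le> h}"
    using set_level_trie by (auto simp: level_trie_def)
qed (rule finite_lists_length_le, simp)

lemma is_trie_level_trie: "is_trie {0..<h * y} (level_trie y h)"
proof -
  have "[] \<in> level_trie y h" by (simp add: level_trie_def level_coded_def)
  moreover have "u \<in> level_trie y h" if "u @ [c] \<in> level_trie y h" for u c
    using that by (simp add: level_trie_def level_coded_snoc)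
  ultimately show ?thesis
    unfolding is_trie_def using finite_level_trie set_level_trie by blast
qed

lemma card_level_trie: "card (level_trie y h) = (\<Sum>i\<le>h. y ^ i)"
proof -
  have "level_trie y h = (\<Union>d\<le>h. {u. length u = d \<and> level_coded y u})"
    by (auto simp: level_trie_def)
  then have "card (level_trie y h) = (\<Sum>d\<le>h. card {u. length u = d \<and> level_coded y u})"
    using finite_level_trie[of y h]
    by (simp, intro card_UN_disjoint) (auto intro: finite_subset)
  then show ?thesis by (simp add: card_level_coded)
qed

lemma trie_height_level_trie: "y > 0 \<Longrightarrow> trie_height (level_trie y h) = h"
  unfolding trie_height_def
proof (rule Max_eqI)
  show "finite (length ` level_trie y h)" using finite_level_trie by simp
  show "d \<le> h" if "d \<in> length ` level_trie y h" for d using that by (auto simp: level_trie_def)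
  assume "y > 0"
  then have "map (\<lambda>i. i * y) [0..<h] \<in> level_trie y h"
    by (simp add: level_trie_def level_coded_def)
  then show "h \<in> length ` level_trie y h" by force
qed

lemma out_level_trie:
  "u \<in> level_trie y h \<Longrightarrow>
     out (level_trie y h) u = (if length u < h then {length u * y..<length u * y + y} else {})"
  unfolding out_def level_trie_def by (auto simp: level_coded_snoc)

lemma branching_level_trie:
  "u \<in> level_trie y h \<Longrightarrow> out (level_trie y h) u = {} \<or> card (out (level_trie y h) u) = y"
  by (simp add: out_level_trie)

lemma length_level_trie_eq_lam:
  assumes "w \<in> level_trie y h" "y > 0"
  shows "length w = (case lam w of None \<Rightarrow> 0 | Some c \<Rightarrow> c div y + 1)"
proof (cases w rule: rev_cases)
  case (snoc x c)
  then have "length x * y \<le> c" "c < length x * y + y"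
    using assms(1) by (auto simp: level_trie_def level_coded_snoc)
  then have "c div y = length x" using \<open>y > 0\<close> by (simp add: div_nat_eqI mult.commute)
  then show ?thesis using snoc by (simp add: lam_def)
qed (simp add: lam_def)

lemma out_level_trie_eq_if_lam_eq:
  assumes "u \<in> level_trie y h" "v \<in> level_trie y h" "y > 0" "lam u = lam v"
  shows "out (level_trie y h) u = out (level_trie y h) v"
proof -
  have "length u = length v"
    using length_level_trie_eq_lam[OF assms(1,3)] length_level_trie_eq_lam[OF assms(2,3)] assms(4)
    by simp
  then show ?thesis using assms(1,2) by (simp add: out_level_trie)
qed

lemma lam_eq_if_lamk_eq: "k \<ge> 1 \<Longrightarrow> lamk k u = lamk k v \<Longrightarrow> lam u = lam v"
  by (cases k) auto

theorem proposition1: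
  fixes n y h :: nat
  assumes "y \<ge> 2"
    and "n = (\<Sum>i\<le>h. y ^ i)"
  shows "\<exists>Sg T. is_trie Sg T \<and> card T = n \<and> trie_height T = h \<and>
           (\<forall>k\<ge>1. real n * Hk Sg T k = 0) \<and>
           (\<forall>k. nHlabel T k \<ge> real (n - 1) * log 2 (real y))"
proof (intro exI conjI allI impI)
  let ?T = "level_trie y h"
  show "is_trie {0..<h * y} ?T" by (rule is_trie_level_trie)
  show card: "card ?T = n" using assms(2) by (simp add: card_level_trie)
  show "trie_height ?T = h" using assms(1) by (simp add: trie_height_level_trie)
  fix k :: nat
  have "real (card ?T - 1) * log 2 (real y) \<le> nHlabel ?T k"
    using assms(1) by (intro nHlabel_ge_log_branching[OF is_trie_level_trie] branching_level_trie) auto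
  then show "real (n - 1) * log 2 (real y) \<le> nHlabel ?T k" using card by simp
  assume "k \<ge> 1"
  have "Hk {0..<h * y} ?T k = 0"
  proof (rule Hk_eq_0_if_context_determines_out)
    fix u v assume "u \<in> ?T" "v \<in> ?T" "lamk k u = lamk k v"
    moreover have "y > 0" using assms(1) by simp
    ultimately show "out ?T u = out ?T v"
      using \<open>k \<ge> 1\<close> by (metis out_level_trie_eq_if_lam_eq lam_eq_if_lamk_eq)
  qed
  then show "real n * Hk {0..<h * y} ?T k = 0" by simp
qed

end
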